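(* Let $\mathcal O_t=\{x\in\mathbb Z^d:N_{t,x}>0\}$ and let $|\mathcal O_t|$ be its cardinality. Suppose that $$\delta:=P\Big(\bigcap_{x\in\mathbb Z^d}\{A_{1,x,0}=0\}\Big)>0.$$ Then $P\big(\lim_{t\to\infty}|\mathcal O_t|\in\{0,\infty\}\big)=1$.
   Context: Let $d\ge1$. For $x\in\mathbb R^d$, $|x|=\sum_i|x_i|$. Let $A_t=(A_{t,x,y})_{x,y\in\mathbb Z^d}$, $t=1,2,\dots$, be i.i.d. random matrices on a probability space $(\Omega,\mathcal F,P)$ such that: (i) $A_{1,x,y}\ge0$; (ii) the columns $\{A_{1,\cdot,y}\}_{y\in\mathbb Z^d}$ are independent; (iii) $P[A_{1,x,y}^2]<\infty$ for all $x,y$; (iv) there is a nonrandom $r_A\in\mathbb N$ with $A_{1,x,y}=0$ a.s. if $|x-y|>r_A$; (v) $(A_{1,x+z,y+z})_{x,y}$ has the same law as $A_1$ for every $z\in\mathbb Z^d$; (vi) with $a_y=P[A_{1,0,y}]$, the set $\{x:\sum_y a_{x+y}a_y\neq0\}$ contains a linear basis of $\mathbb R^d$. Given a nonrandom $N_0\in[0,\infty)^{\mathbb Z^d}$ with $\{x:N_{0,x}>0\}$ finite and nonempty, define $N_{t,y}=\sum_xN_{t-1,x}A_{t,x,y}$ for $t\ge1$. *)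

theory Defs
  imports "HOL-Probability.Probability"
begin

text \<open>Sites of Z^d are vectors int^'d ('d a finite index type, so d >= 1).\<close>

definition l1norm :: "int ^ 'd \<Rightarrow> int" where
  "l1norm x = (\<Sum>i\<in>UNIV. \<bar>x $ i\<bar>)"

definition to_real_vec :: "int ^ 'd \<Rightarrow> real ^ 'd" where
  "to_real_vec x = (\<chi> i. real_of_int (x $ i))"

definition mat_space :: "(int ^ 'd \<Rightarrow> int ^ 'd \<Rightarrow> real) measure" where
  "mat_space = PiM UNIV (\<lambda>_. PiM UNIV (\<lambda>_. borel))"

definition col_space :: "(int ^ 'd \<Rightarrow> real) measure" where
  "col_space = PiM UNIV (\<lambda>_. borel)"

primrec popN :: "(nat \<Rightarrow> 'w \<Rightarrow> int ^ 'd \<Rightarrow> int ^ 'd \<Rightarrow> real) \<Rightarrow> (int ^ 'd \<Rightarrow> real)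
                 \<Rightarrow> nat \<Rightarrow> 'w \<Rightarrow> int ^ 'd \<Rightarrow> real" where
  "popN A N0 0 \<omega> = N0"
| "popN A N0 (Suc t) \<omega> = (\<lambda>y. infsum (\<lambda>x. popN A N0 t \<omega> x * A (Suc t) \<omega> x y) UNIV)"

definition occupied :: "(nat \<Rightarrow> 'w \<Rightarrow> int ^ 'd \<Rightarrow> int ^ 'd \<Rightarrow> real) \<Rightarrow> (int ^ 'd \<Rightarrow> real)
                 \<Rightarrow> nat \<Rightarrow> 'w \<Rightarrow> (int ^ 'd) set" where
  "occupied A N0 t \<omega> = {x. popN A N0 t \<omega> x > 0}"

definition ecard :: "'a set \<Rightarrow> ereal" where
  "ecard S = (if finite S then ereal (real (card S)) else \<infinity>)"

end

theory Submission
  imports Defs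
begin

(*
  Extinction or explosion: for the linear growth model N_t = N_{t-1} A_t driven by i.i.d.
  nonnegative random matrices of finite range r_A, if a fixed column of A_1 vanishes with
  probability delta > 0, then almost surely the number of occupied sites tends to 0 or to
  infinity.

  Fix K and call a time t small if the occupied set O_t is nonempty with at most K
  sites.  If all columns of A_{t+1} indexed by the r_A-neighbourhood of O_t vanish, then
  O_{t+1} is empty.  Independence of the columns and shift invariance give this event
  probability delta^(#neighbourhood) >= eps_K := delta^(K*c), with c the size of an l1-ball,
  and A_{t+1} is independent of the history up to time t.  Hence the probability of seeing
  n+1 small times is at most (1 - eps_K)^n, so almost surely there are only finitely many
  small times, for every K at once.  Finally, a sequence of finite sets in which the empty
  set is absorbing and which is small only finitely often has cardinality tending to 0 or
  to infinity.
*)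

definition nbhd :: "nat \<Rightarrow> (int^'d) set \<Rightarrow> (int^'d) set" where
  "nbhd r S = {y. \<exists>x\<in>S. l1norm (x - y) \<le> int r}"

lemma finite_l1_ball: "finite {z::int^'d. l1norm z \<le> int r}"
proof -
  have "-int r \<le> z $ i \<and> z $ i \<le> int r" if "l1norm z \<le> int r" for z :: "int^'d" and i
  proof -
    have "\<bar>z $ i\<bar> \<le> (\<Sum>j\<in>UNIV. \<bar>z $ j\<bar>)" by (rule member_le_sum) auto
    with that show ?thesis by (simp add: l1norm_def abs_le_iff)
  qed
  then have "{z::int^'d. l1norm z \<le> int r} \<subseteq> vec_lambda ` (PiE UNIV (\<lambda>_. {-int r..int r}))"
    by (auto intro!: image_eqI[of _ _ "vec_nth z" for z])
  then show ?thesis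
    by (rule finite_subset) (intro finite_imageI finite_PiE; simp)
qed

lemma nbhd_as_image: "nbhd r S = (\<lambda>(x, z). x - z) ` (S \<times> {z. l1norm z \<le> int r})"
  unfolding nbhd_def by (force simp: image_iff)

lemma finite_nbhd: "finite S \<Longrightarrow> finite (nbhd r S)"
  unfolding nbhd_as_image by (intro finite_imageI finite_cartesian_product finite_l1_ball)

lemma card_nbhd_le:
  assumes "finite (S :: (int^'d) set)"
  shows "card (nbhd r S) \<le> card S * card {z::int^'d. l1norm z \<le> int r}"
  unfolding nbhd_as_image card_cartesian_product[symmetric]
  using assms finite_l1_ball by (intro card_image_le finite_cartesian_product)

lemma subset_nbhd: "S \<subseteq> nbhd r S"
  unfolding nbhd_def l1norm_def by force

(* The truncated dynamics driven by a sequence H of matrices: entries are replaced by their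
   positive part and cut off beyond range r, and sums run over the finite region reach t that
   can possibly be occupied at time t.  It is a finite, measurable version of popN. *)

definition trunc_mat :: "nat \<Rightarrow> (int^'d \<Rightarrow> int^'d \<Rightarrow> real) \<Rightarrow> int^'d \<Rightarrow> int^'d \<Rightarrow> real" where
  "trunc_mat r B x y = (if l1norm (x - y) \<le> int r then max 0 (B x y) else 0)"

primrec reach :: "nat \<Rightarrow> (int^'d \<Rightarrow> real) \<Rightarrow> nat \<Rightarrow> (int^'d) set" where
  "reach r N0 0 = {x. 0 < N0 x}"
| "reach r N0 (Suc t) = nbhd r (reach r N0 t)"

primrec tpop :: "nat \<Rightarrow> (int^'d \<Rightarrow> real) \<Rightarrow> (nat \<Rightarrow> int^'d \<Rightarrow> int^'d \<Rightarrow> real)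
                 \<Rightarrow> nat \<Rightarrow> int^'d \<Rightarrow> real" where
  "tpop r N0 H 0 = N0"
| "tpop r N0 H (Suc t) =
     (\<lambda>y. \<Sum>x\<in>reach r N0 t. tpop r N0 H t x * trunc_mat r (H (Suc t)) x y)"

definition tocc :: "nat \<Rightarrow> (int^'d \<Rightarrow> real) \<Rightarrow> (nat \<Rightarrow> int^'d \<Rightarrow> int^'d \<Rightarrow> real)
                    \<Rightarrow> nat \<Rightarrow> (int^'d) set" where
  "tocc r N0 H t = {x. 0 < tpop r N0 H t x}"

(* All columns of B indexed by the r-neighbourhood of S vanish: then mass on S is killed. *)
definition cols_vanish :: "nat \<Rightarrow> (int^'d) set \<Rightarrow> (int^'d \<Rightarrow> int^'d \<Rightarrow> real) \<Rightarrow> bool" where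
  "cols_vanish r S B \<longleftrightarrow> (\<forall>y\<in>nbhd r S. \<forall>x. B x y = 0)"

lemma tpop_history_cong:
  "(\<And>i. i \<in> {1..t} \<Longrightarrow> H i = H' i) \<Longrightarrow> tpop r N0 H t = tpop r N0 H' t"
  by (induction t) auto

definition small :: "nat \<Rightarrow> (int^'d \<Rightarrow> real) \<Rightarrow> nat \<Rightarrow> (nat \<Rightarrow> int^'d \<Rightarrow> int^'d \<Rightarrow> real)
                     \<Rightarrow> nat \<Rightarrow> bool" where
  "small r N0 K H t \<longleftrightarrow> tocc r N0 H t \<noteq> {} \<and> card (tocc r N0 H t) \<le> K"

primrec nsmall :: "nat \<Rightarrow> (int^'d \<Rightarrow> real) \<Rightarrow> nat \<Rightarrow> (nat \<Rightarrow> int^'d \<Rightarrow> int^'d \<Rightarrow> real)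
                   \<Rightarrow> nat \<Rightarrow> nat" where
  "nsmall r N0 K H 0 = 0"
| "nsmall r N0 K H (Suc t) = nsmall r N0 K H t + (if small r N0 K H t then 1 else 0)"

lemma nsmall_history_cong:
  "(\<And>i. i \<in> {1..t} \<Longrightarrow> H i = H' i) \<Longrightarrow> nsmall r N0 K H t = nsmall r N0 K H' t"
proof (induction t)
  case (Suc t)
  then have "tpop r N0 H t = tpop r N0 H' t" by (intro tpop_history_cong) auto
  with Suc show ?case by (simp add: small_def tocc_def)
qed simp

lemma nsmall_mono: "s \<le> t \<Longrightarrow> nsmall r N0 K H s \<le> nsmall r N0 K H t"
  by (induction t rule: dec_induct) auto

lemma nsmall_after_small:
  "s < t \<Longrightarrow> small r N0 K H s \<Longrightarrow> Suc (nsmall r N0 K H s) \<le> nsmall r N0 K H t"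
  using nsmall_mono[of "Suc s" t r N0 K H] by simp

lemma nsmall_unbounded:
  assumes "\<And>T0. \<exists>t\<ge>T0. small r N0 K H t"
  shows "\<exists>T. n \<le> nsmall r N0 K H T"
proof (induction n)
  case (Suc n)
  then obtain T where T: "n \<le> nsmall r N0 K H T" by auto
  obtain t where "t \<ge> T" "small r N0 K H t" using assms by blast
  then have "Suc (nsmall r N0 K H T) \<le> nsmall r N0 K H (Suc t)"
    using nsmall_mono[of T t r N0 K H] by simp
  then show ?case using T by (intro exI[of _ "Suc t"]) simp
qed simp

lemma nsmall_reaches:
  "Suc n \<le> nsmall r N0 K H T \<Longrightarrow> \<exists>t<T. nsmall r N0 K H t = n \<and> small r N0 K H t"
proof (induction T)
  case (Suc T)
  show ?case
  proof (cases "Suc n \<le> nsmall r N0 K H T")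
    case True
    then show ?thesis using Suc.IH by (meson less_SucI)
  next
    case False
    then show ?thesis using Suc.prems by (intro exI[of _ T]) (auto split: if_splits)
  qed
qed simp

lemma mat_entry_measurable[measurable]: "(\<lambda>B. B x y) \<in> borel_measurable mat_space"
  unfolding mat_space_def
  by (rule measurable_compose[of _ _ "PiM UNIV (\<lambda>_. borel)"])
     (rule measurable_component_singleton, simp)+

lemma space_mat_space: "space mat_space = UNIV"
  by (simp add: mat_space_def space_PiM PiE_UNIV_domain)

lemma cols_vanish_pred: "finite S \<Longrightarrow> Measurable.pred mat_space (cols_vanish r S)"
  unfolding cols_vanish_def[abs_def] by (intro pred_intros_finite finite_nbhd) measurable

lemma tpop_measurable:
  "{1..t} \<subseteq> I \<Longrightarrow> (\<lambda>H. tpop r N0 H t y) \<in> borel_measurable (PiM I (\<lambda>_. mat_space))"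
proof (induction t arbitrary: y)
  case (Suc t)
  have "{1..t} \<subseteq> I"
    using subset_trans[OF _ Suc.prems, of "{1..t}"] by simp
  then have [measurable]: "(\<lambda>H. tpop r N0 H t x) \<in> borel_measurable (PiM I (\<lambda>_. mat_space))" for x
    using Suc.IH by blast
  have [measurable]: "(\<lambda>H. H (Suc t) x y) \<in> borel_measurable (PiM I (\<lambda>_. mat_space))" for x y
    using Suc.prems
    by (intro measurable_compose[of "\<lambda>H. H (Suc t)" _ mat_space, OF _ mat_entry_measurable]
        measurable_component_singleton) auto
  show ?case unfolding tpop.simps trunc_mat_def by measurable
qed simp

locale initial_population =
  fixes N0 :: "int^'d \<Rightarrow> real"
  assumes N0_nonneg: "\<And>x. N0 x \<ge> 0"
    and N0_finite: "finite {x. 0 < N0 x}"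
begin

lemma finite_reach: "finite (reach r N0 t)"
  using N0_finite by (induction t) (auto simp: finite_nbhd)

lemma tpop_nonneg: "tpop r N0 H t y \<ge> 0"
  using N0_nonneg
  by (induction t arbitrary: y) (auto intro!: sum_nonneg mult_nonneg_nonneg simp: trunc_mat_def)

lemma tpop_outside_reach: "y \<notin> reach r N0 t \<Longrightarrow> tpop r N0 H t y = 0"
proof (induction t arbitrary: y)
  case 0
  then show ?case using N0_nonneg[of y] by simp
next
  case (Suc t)
  then have "trunc_mat r (H (Suc t)) x y = 0" if "x \<in> reach r N0 t" for x
    using that by (auto simp: trunc_mat_def nbhd_def)
  then show ?case by simp
qed

lemma tocc_subset_reach: "tocc r N0 H t \<subseteq> reach r N0 t"
  unfolding tocc_def using tpop_outside_reach by fastforce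

lemma finite_tocc: "finite (tocc r N0 H t)"
  using finite_subset[OF tocc_subset_reach finite_reach] .

lemma tocc_empty_iff: "tocc r N0 H t = {} \<longleftrightarrow> (\<forall>y. tpop r N0 H t y = 0)"
  using tpop_nonneg[of r H t] unfolding tocc_def by (auto simp: order_less_le)

lemma tocc_empty_absorbing:
  assumes "tocc r N0 H t = {}" "t \<le> s"
  shows "tocc r N0 H s = {}"
  using assms(2,1) by (induction s rule: dec_induct) (simp_all add: tocc_empty_iff)

lemma tocc_killed:
  assumes vanish: "cols_vanish r (tocc r N0 H t) (H (Suc t))"
  shows "tocc r N0 H (Suc t) = {}"
proof -
  have "tpop r N0 H t x * trunc_mat r (H (Suc t)) x y = 0" for x y
  proof (cases "x \<in> tocc r N0 H t")
    case True
    then show ?thesis using vanish by (auto simp: cols_vanish_def trunc_mat_def nbhd_def)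
  next
    case False
    then show ?thesis using tpop_nonneg[of r H t x] by (simp add: tocc_def)
  qed
  then show ?thesis by (auto simp: tocc_empty_iff intro!: sum.neutral)
qed

lemma nsmall_frozen_after_extinction:
  assumes "tocc r N0 H t = {}" "t \<le> s"
  shows "nsmall r N0 K H s = nsmall r N0 K H t"
  using assms(2)
proof (induction s rule: dec_induct)
  case (step s)
  then have "\<not> small r N0 K H s"
    using tocc_empty_absorbing[OF assms(1)] by (simp add: small_def)
  with step.IH show ?case by simp
qed simp

(* Before the counter reaches n+2 there is a small time, counted as the (n+1)-st, at which
   the population survives one more step: otherwise the counter would freeze. *)
lemma nsmall_survived_small_time:
  assumes T: "Suc (Suc n) \<le> nsmall r N0 K H T"
  shows "\<exists>t<T. nsmall r N0 K H t = n \<and> small r N0 K H t \<and> tocc r N0 H (Suc t) \<noteq> {}"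
proof -
  obtain t where t: "t < T" "nsmall r N0 K H t = n" "small r N0 K H t"
    using nsmall_reaches[of n r N0 K H T] T by auto
  have "tocc r N0 H (Suc t) \<noteq> {}"
  proof
    assume "tocc r N0 H (Suc t) = {}"
    then have "nsmall r N0 K H T = nsmall r N0 K H (Suc t)"
      using t(1) by (intro nsmall_frozen_after_extinction) auto
    then show False using t T by simp
  qed
  with t show ?thesis by blast
qed

lemma tocc_eq_iff:
  "tocc r N0 H t = S \<longleftrightarrow>
   S \<subseteq> reach r N0 t \<and> (\<forall>x\<in>reach r N0 t. 0 < tpop r N0 H t x \<longleftrightarrow> x \<in> S)"
  using tocc_subset_reach[of r H t] unfolding tocc_def by auto

lemma small_iff:
  "small r N0 K H t \<longleftrightarrow> (\<exists>S\<in>Pow (reach r N0 t). S \<noteq> {} \<and> card S \<le> K \<and> tocc r N0 H t = S)"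
  using tocc_subset_reach[of r H t] unfolding small_def by auto

(* Events about the occupied set and the counter are measurable in the history; by the
   two characterizations above they are finite Boolean combinations of measurable events. *)
lemma tocc_eq_pred:
  assumes "{1..t} \<subseteq> I"
  shows "Measurable.pred (PiM I (\<lambda>_. mat_space)) (\<lambda>H. tocc r N0 H t = S)"
proof -
  have [measurable]: "(\<lambda>H. tpop r N0 H t x) \<in> borel_measurable (PiM I (\<lambda>_. mat_space))" for x
    using assms by (rule tpop_measurable)
  show ?thesis unfolding tocc_eq_iff
    by (intro pred_intros_logic pred_intros_finite finite_reach) (auto intro: pred_intros_logic)
qed

lemma small_pred:
  "{1..t} \<subseteq> I \<Longrightarrow> Measurable.pred (PiM I (\<lambda>_. mat_space)) (\<lambda>H. small r N0 K H t)"
  unfolding small_iff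
  by (intro pred_intros_finite finite_reach pred_intros_logic tocc_eq_pred) (auto simp: finite_reach)

lemma nsmall_eq_pred:
  "{1..t} \<subseteq> I \<Longrightarrow> Measurable.pred (PiM I (\<lambda>_. mat_space)) (\<lambda>H. nsmall r N0 K H t = n)"
proof (induction t arbitrary: n)
  case (Suc t)
  have sub: "{1..t} \<subseteq> I"
    using subset_trans[OF _ Suc.prems, of "{1..t}"] by simp
  have "nsmall r N0 K H (Suc t) = n \<longleftrightarrow>
        (small r N0 K H t \<and> 0 < n \<and> nsmall r N0 K H t = n - 1) \<or>
        (\<not> small r N0 K H t \<and> nsmall r N0 K H t = n)" for H
    by auto
  then show ?case
    by (simp only:) (intro pred_intros_logic small_pred[OF sub] Suc.IH[OF sub]; simp)
qed simp

end

lemma ecard_tends_to_zero_or_infinity: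
  fixes S :: "nat \<Rightarrow> 'a set"
  assumes fin: "\<And>t. finite (S t)"
    and absorb: "\<And>t s. S t = {} \<Longrightarrow> t \<le> s \<Longrightarrow> S s = {}"
    and eventually_large: "\<And>K. \<exists>T0. \<forall>t\<ge>T0. S t = {} \<or> K < card (S t)"
  shows "((\<lambda>t. ecard (S t)) \<longlonglongrightarrow> 0) \<or> ((\<lambda>t. ecard (S t)) \<longlonglongrightarrow> \<infinity>)"
proof (cases "\<exists>t0. S t0 = {}")
  case True
  then obtain t0 where "S t0 = {}" by blast
  then have "\<forall>\<^sub>F t in sequentially. ecard (S t) = 0"
    unfolding eventually_sequentially using absorb
    by (intro exI[of _ t0]) (simp add: ecard_def zero_ereal_def)
  then show ?thesis by (intro disjI1 tendsto_eventually)
next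
  case False
  have "\<forall>\<^sub>F t in sequentially. ereal r < ecard (S t)" for r :: real
  proof -
    obtain T0 where T0: "\<forall>t\<ge>T0. S t = {} \<or> nat \<lceil>r\<rceil> < card (S t)"
      using eventually_large by blast
    have "r < real (card (S t))" if "t \<ge> T0" for t
    proof -
      have "real (nat \<lceil>r\<rceil>) < real (card (S t))" using T0 that False by auto
      with real_nat_ceiling_ge[of r] show ?thesis by linarith
    qed
    then have "\<forall>t\<ge>T0. r < real (card (S t))" by blast
    then show ?thesis unfolding eventually_sequentially using fin by (auto simp: ecard_def)
  qed
  then show ?thesis by (intro disjI2) (simp add: tendsto_PInfty)
qed

lemma (in prob_space) prob_indep_past_present:
  assumes ind: "indep_vars (\<lambda>_. N) X I" and J: "J \<subseteq> I" "i \<in> I" "i \<notin> J"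
    and Xa: "Xa \<in> sets (PiM J (\<lambda>_. N))" and Xb: "Xb \<in> sets N"
  shows "prob {\<omega> \<in> space M. restrict (\<lambda>j. X j \<omega>) J \<in> Xa \<and> X i \<omega> \<in> Xb}
       = prob {\<omega> \<in> space M. restrict (\<lambda>j. X j \<omega>) J \<in> Xa} * prob {\<omega> \<in> space M. X i \<omega> \<in> Xb}"
proof -
  let ?past = "\<lambda>\<omega>. restrict (\<lambda>j. X j \<omega>) J" and ?now = "\<lambda>\<omega>. restrict (\<lambda>j. X j \<omega>) {i}"
  have iv: "indep_var (PiM J (\<lambda>_. N)) ?past (PiM {i} (\<lambda>_. N)) ?now"
    using J by (intro indep_var_restrict[OF ind]) auto
  define Xb' where "Xb' = (\<lambda>f. f i) -` Xb \<inter> space (PiM {i} (\<lambda>_. N))"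
  have Xb': "Xb' \<in> sets (PiM {i} (\<lambda>_. N))"
    unfolding Xb'_def
    by (rule measurable_sets[OF _ Xb], rule measurable_component_singleton[where M="\<lambda>_. N"]) simp
  have Xi: "X i \<in> measurable M N" using ind J unfolding indep_vars_def2 by auto
  have now_iff: "?now \<omega> \<in> Xb' \<longleftrightarrow> X i \<omega> \<in> Xb" if "\<omega> \<in> space M" for \<omega>
    using measurable_space[OF Xi that] unfolding Xb'_def by (simp add: space_PiM restrict_PiE_iff)
  have "prob {\<omega> \<in> space M. ?past \<omega> \<in> Xa \<and> X i \<omega> \<in> Xb}
        = prob ((\<lambda>\<omega>. (?past \<omega>, ?now \<omega>)) -` (Xa \<times> Xb') \<inter> space M)"
    using now_iff by (intro arg_cong[where f=prob]) auto
  also have "\<dots> = prob (?past -` Xa \<inter> space M) * prob (?now -` Xb' \<inter> space M)"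
    by (rule indep_varD[OF iv Xa Xb'])
  also have "?past -` Xa \<inter> space M = {\<omega> \<in> space M. ?past \<omega> \<in> Xa}"
    by auto
  also have "?now -` Xb' \<inter> space M = {\<omega> \<in> space M. X i \<omega> \<in> Xb}"
    using now_iff by auto
  finally show ?thesis .
qed

locale random_growth = prob_space M + initial_population N0
  for M :: "'w measure" and N0 :: "int^'d \<Rightarrow> real" +
  fixes A :: "nat \<Rightarrow> 'w \<Rightarrow> int^'d \<Rightarrow> int^'d \<Rightarrow> real" and rA :: nat
  assumes iid_indep: "indep_vars (\<lambda>_. mat_space) A {1..}"
    and iid_dist: "\<And>t. t \<ge> 1 \<Longrightarrow> distr M mat_space (A t) = distr M mat_space (A 1)"
    and nonneg: "\<And>x y. AE \<omega> in M. A 1 \<omega> x y \<ge> 0"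
    and cols_indep: "indep_vars (\<lambda>_. col_space) (\<lambda>y \<omega>. (\<lambda>x. A 1 \<omega> x y)) UNIV"
    and finite_range: "\<And>x y. l1norm (x - y) > int rA \<Longrightarrow> AE \<omega> in M. A 1 \<omega> x y = 0"
    and shift_inv: "\<And>z. distr M mat_space (\<lambda>\<omega>. (\<lambda>x y. A 1 \<omega> (x + z) (y + z)))
                         = distr M mat_space (A 1)"
    and delta_pos: "prob {\<omega> \<in> space M. \<forall>x. A 1 \<omega> x 0 = 0} > 0"
begin

definition delta :: real where
  "delta = prob {\<omega> \<in> space M. \<forall>x. A 1 \<omega> x 0 = 0}"

abbreviation hist :: "nat \<Rightarrow> 'w \<Rightarrow> nat \<Rightarrow> int^'d \<Rightarrow> int^'d \<Rightarrow> real" where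
  "hist t \<omega> \<equiv> restrict (\<lambda>i. A i \<omega>) {1..t}"

abbreviation occ :: "nat \<Rightarrow> 'w \<Rightarrow> (int^'d) set" where
  "occ t \<omega> \<equiv> tocc rA N0 (\<lambda>i. A i \<omega>) t"

abbreviation count_small :: "nat \<Rightarrow> nat \<Rightarrow> 'w \<Rightarrow> nat" where
  "count_small K t \<omega> \<equiv> nsmall rA N0 K (\<lambda>i. A i \<omega>) t"

abbreviation is_small :: "nat \<Rightarrow> nat \<Rightarrow> 'w \<Rightarrow> bool" where
  "is_small K t \<omega> \<equiv> small rA N0 K (\<lambda>i. A i \<omega>) t"

lemma A_measurable: "t \<ge> 1 \<Longrightarrow> A t \<in> measurable M mat_space"
  using iid_indep unfolding indep_vars_def2 by auto

lemma hist_measurable: "hist t \<in> measurable M (PiM {1..t} (\<lambda>_. mat_space))"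
  by (rule measurable_restrict) (auto intro: A_measurable)

lemma pred_hist:
  "Measurable.pred (PiM {1..t} (\<lambda>_. mat_space)) P \<Longrightarrow> Measurable.pred M (\<lambda>\<omega>. P (hist t \<omega>))"
  by (rule measurable_compose[OF hist_measurable])

lemma occ_hist: "occ t \<omega> = tocc rA N0 (hist t \<omega>) t"
  unfolding tocc_def by (subst tpop_history_cong[of t _ "hist t \<omega>"]) auto

lemma is_small_hist: "is_small K t \<omega> = small rA N0 K (hist t \<omega>) t"
  unfolding small_def occ_hist ..

lemma count_small_hist: "count_small K t \<omega> = nsmall rA N0 K (hist t \<omega>) t"
  by (rule nsmall_history_cong) simp

lemma count_small_measurable[measurable]:
  "(\<lambda>\<omega>. count_small K t \<omega>) \<in> measurable M (count_space UNIV)"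
proof -
  have "{\<omega>\<in>space M. count_small K t \<omega> = n} \<in> sets M" for n
    unfolding count_small_hist by (intro predE pred_hist nsmall_eq_pred) simp
  moreover have "(\<lambda>\<omega>. count_small K t \<omega>) -` {n} \<inter> space M = {\<omega>\<in>space M. count_small K t \<omega> = n}" for n
    by auto
  ultimately show ?thesis
    unfolding measurable_count_space_eq2_countable by simp
qed

lemma pred_count_small_ge: "Measurable.pred M (\<lambda>\<omega>. n \<le> count_small K t \<omega>)"
  by measurable

lemma pred_occ_eq: "Measurable.pred M (\<lambda>\<omega>. occ t \<omega> = S)"
  unfolding occ_hist by (rule pred_hist, rule tocc_eq_pred) simp

lemma pred_is_small: "Measurable.pred M (\<lambda>\<omega>. is_small K t \<omega>)"
  unfolding is_small_hist by (rule pred_hist, rule small_pred) simp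

lemma prob_A_eq:
  assumes t: "t \<ge> 1" and P: "Measurable.pred mat_space P"
  shows "prob {\<omega>\<in>space M. P (A t \<omega>)} = prob {\<omega>\<in>space M. P (A 1 \<omega>)}"
proof -
  have S: "{B \<in> space mat_space. P B} \<in> sets mat_space" using P by (simp add: pred_def)
  have "prob {\<omega>\<in>space M. P (A s \<omega>)} = measure (distr M mat_space (A s)) {B \<in> space mat_space. P B}"
    if "s \<ge> 1" for s
    using that
    by (subst measure_distr[OF A_measurable S]) (auto simp: space_mat_space intro!: arg_cong[where f=prob])
  then show ?thesis using iid_dist[OF t] t by simp
qed

lemma AE_A_transfer:
  assumes t: "t \<ge> 1" and P: "Measurable.pred mat_space P" and ae: "AE \<omega> in M. P (A 1 \<omega>)"
  shows "AE \<omega> in M. P (A t \<omega>)"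
proof -
  have S: "{B \<in> space mat_space. P B} \<in> sets mat_space" using P by (simp add: pred_def)
  have "AE B in distr M mat_space (A 1). P B"
    using ae by (subst AE_distr_iff[OF A_measurable S]) auto
  then have "AE B in distr M mat_space (A t). P B" by (subst iid_dist[OF t])
  then show ?thesis by (subst (asm) AE_distr_iff[OF A_measurable[OF t] S]) auto
qed

definition regular :: "'w \<Rightarrow> bool" where
  "regular \<omega> \<longleftrightarrow> (\<forall>t x y. t \<ge> 1 \<longrightarrow> A t \<omega> x y \<ge> 0 \<and> (l1norm (x - y) > int rA \<longrightarrow> A t \<omega> x y = 0))"

lemma AE_regular: "AE \<omega> in M. regular \<omega>"
proof -
  have entry: "AE \<omega> in M. 0 \<le> A t \<omega> x y \<and> (int rA < l1norm (x - y) \<longrightarrow> A t \<omega> x y = 0)"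
    if t: "1 \<le> t" for t x y
  proof -
    have "AE \<omega> in M. 0 \<le> A t \<omega> x y"
      by (rule AE_A_transfer[OF t _ nonneg]) measurable
    moreover have "AE \<omega> in M. int rA < l1norm (x - y) \<longrightarrow> A t \<omega> x y = 0"
    proof (cases "int rA < l1norm (x - y)")
      case True
      have "AE \<omega> in M. A t \<omega> x y = 0"
        by (rule AE_A_transfer[OF t _ finite_range[OF True]]) measurable
      then show ?thesis by simp
    qed simp
    ultimately show ?thesis by eventually_elim simp
  qed
  show ?thesis
    unfolding regular_def by (intro AE_all_countable[THEN iffD2] allI AE_impI entry)
qed

lemma popN_eq_tpop:
  assumes "regular \<omega>"
  shows "popN A N0 t \<omega> = tpop rA N0 (\<lambda>i. A i \<omega>) t"
proof (induction t)
  case (Suc t)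
  show ?case
  proof
    fix y
    have "popN A N0 (Suc t) \<omega> y = (\<Sum>\<^sub>\<infinity>x. tpop rA N0 (\<lambda>i. A i \<omega>) t x * A (Suc t) \<omega> x y)"
      using Suc by simp
    also have "\<dots> = (\<Sum>\<^sub>\<infinity>x\<in>reach rA N0 t. tpop rA N0 (\<lambda>i. A i \<omega>) t x * A (Suc t) \<omega> x y)"
      by (rule infsum_cong_neutral) (auto simp: tpop_outside_reach)
    also have "\<dots> = (\<Sum>x\<in>reach rA N0 t. tpop rA N0 (\<lambda>i. A i \<omega>) t x * trunc_mat rA (A (Suc t) \<omega>) x y)"
      using assms finite_reach unfolding regular_def trunc_mat_def
      by (auto intro!: sum.cong simp: not_le)
    finally show "popN A N0 (Suc t) \<omega> y = tpop rA N0 (\<lambda>i. A i \<omega>) (Suc t) y" by simp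
  qed
qed simp

(* By shift invariance every column of A 1 vanishes with the same probability delta. *)
lemma prob_column_zero: "prob {\<omega>\<in>space M. \<forall>x. A 1 \<omega> x y = 0} = delta"
proof -
  let ?W = "{B. \<forall>x. B x 0 = 0}" and ?shift = "\<lambda>\<omega>. (\<lambda>x y'. A 1 \<omega> (x + y) (y' + y))"
  have W: "?W \<in> sets mat_space"
  proof -
    have "Measurable.pred mat_space (\<lambda>B. \<forall>x. B x 0 = 0)" by measurable
    then show ?thesis by (simp add: pred_def space_mat_space)
  qed
  have shift: "?shift \<in> measurable M mat_space"
    unfolding mat_space_def
    by (intro measurable_PiM_single' measurable_compose[OF A_measurable mat_entry_measurable])
       (simp_all add: space_PiM PiE_UNIV_domain)
  have "{\<omega>\<in>space M. \<forall>x. A 1 \<omega> x y = 0} = ?shift -` ?W \<inter> space M"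
    by (auto, metis add_0 diff_add_cancel)
  then have "prob {\<omega>\<in>space M. \<forall>x. A 1 \<omega> x y = 0} = prob (?shift -` ?W \<inter> space M)"
    by simp
  also have "\<dots> = measure (distr M mat_space ?shift) ?W"
    by (rule measure_distr[OF shift W, symmetric])
  also have "\<dots> = measure (distr M mat_space (A 1)) ?W"
    by (simp only: shift_inv)
  also have "\<dots> = delta"
    unfolding delta_def by (simp add: measure_distr[OF A_measurable W] vimage_def Int_def conj_commute)
  finally show ?thesis .
qed

lemma delta_gt_0: "delta > 0"
  unfolding delta_def by (rule delta_pos)

lemma delta_le_1: "delta \<le> 1"
  unfolding delta_def by simp

(* Independence of the columns: all columns indexed by the neighbourhood of S vanish
   with probability delta to the size of that neighbourhood. *)
lemma prob_cols_vanish: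
  assumes "S \<noteq> {}" "finite S"
  shows "prob {\<omega>\<in>space M. cols_vanish rA S (A 1 \<omega>)} = delta ^ card (nbhd rA S)"
proof -
  let ?J = "nbhd rA S" and ?E = "\<lambda>y. (\<lambda>\<omega> x. A 1 \<omega> x y) -` {c. \<forall>x. c x = 0} \<inter> space M"
  have ind: "indep_sets (\<lambda>y. {(\<lambda>\<omega> x. A 1 \<omega> x y) -` B \<inter> space M | B. B \<in> sets col_space}) UNIV"
    using cols_indep unfolding indep_vars_def2 by auto
  have zero_col: "{c. \<forall>x. c x = 0} \<in> sets col_space"
  proof -
    have "Measurable.pred col_space (\<lambda>c. \<forall>x. c x = 0)"
      unfolding col_space_def by measurable
    then show ?thesis by (simp add: pred_def col_space_def space_PiM PiE_UNIV_domain)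
  qed
  have J: "?J \<noteq> {}" "finite ?J"
    using assms subset_nbhd[of S rA] finite_nbhd[of S rA] by auto
  have "prob (\<Inter>y\<in>?J. ?E y) = (\<Prod>y\<in>?J. prob (?E y))"
    using J zero_col by (intro indep_setsD[OF ind]) blast+
  moreover have "(\<Inter>y\<in>?J. ?E y) = {\<omega>\<in>space M. cols_vanish rA S (A 1 \<omega>)}"
    using J unfolding cols_vanish_def by auto
  moreover have "prob (?E y) = delta" for y
    by (subst prob_column_zero[symmetric, of y]) (auto intro!: arg_cong[where f=prob])
  ultimately show ?thesis by simp
qed

(* A uniform lower bound for the killing probability of an occupied set of size at most K. *)
definition eps :: "nat \<Rightarrow> real" where
  "eps K = delta ^ (K * card {z::int^'d. l1norm z \<le> int rA})"

lemma eps_pos: "eps K > 0"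
  unfolding eps_def using delta_gt_0 by simp

lemma eps_le_1: "eps K \<le> 1"
  unfolding eps_def using delta_gt_0 delta_le_1 by (simp add: power_le_one)

lemma prob_cols_vanish_ge:
  assumes "S \<noteq> {}" "finite S" "card S \<le> K"
  shows "prob {\<omega>\<in>space M. cols_vanish rA S (A 1 \<omega>)} \<ge> eps K"
proof -
  have "card (nbhd rA S) \<le> card S * card {z::int^'d. l1norm z \<le> int rA}"
    using assms(2) by (rule card_nbhd_le)
  also have "\<dots> \<le> K * card {z::int^'d. l1norm z \<le> int rA}"
    using assms(3) by simp
  finally have "delta ^ (K * card {z::int^'d. l1norm z \<le> int rA}) \<le> delta ^ card (nbhd rA S)"
    using delta_gt_0 delta_le_1 by (intro power_decreasing) auto
  then show ?thesis unfolding eps_def prob_cols_vanish[OF assms(1,2)] .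
qed

lemma prob_not_killed:
  assumes Xa: "Xa \<in> sets (PiM {1..t} (\<lambda>_. mat_space))"
    and S: "S \<noteq> {}" "finite S" "card S \<le> K"
  shows "prob {\<omega>\<in>space M. hist t \<omega> \<in> Xa \<and> \<not> cols_vanish rA S (A (Suc t) \<omega>)}
         \<le> (1 - eps K) * prob {\<omega>\<in>space M. hist t \<omega> \<in> Xa}"
proof -
  have V: "{B \<in> space mat_space. cols_vanish rA S B} \<in> sets mat_space"
    using cols_vanish_pred[OF S(2)] by (simp add: pred_def)
  have Xb: "{B. \<not> cols_vanish rA S B} \<in> sets mat_space"
    using sets.compl_sets[OF V] by (simp add: space_mat_space set_diff_eq)
  have "prob {\<omega>\<in>space M. A (Suc t) \<omega> \<in> {B. \<not> cols_vanish rA S B}}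
        = prob (space M - {\<omega>\<in>space M. cols_vanish rA S (A (Suc t) \<omega>)})"
    by (rule arg_cong[where f=prob]) auto
  also have "\<dots> = 1 - prob {\<omega>\<in>space M. cols_vanish rA S (A (Suc t) \<omega>)}"
    by (intro prob_compl predE measurable_compose[OF A_measurable cols_vanish_pred[OF S(2)]]) simp
  also have "\<dots> = 1 - prob {\<omega>\<in>space M. cols_vanish rA S (A 1 \<omega>)}"
    using prob_A_eq[of "Suc t", OF _ cols_vanish_pred[OF S(2)]] by simp
  also have "\<dots> \<le> 1 - eps K"
    using prob_cols_vanish_ge[OF S] by simp
  finally have p: "prob {\<omega>\<in>space M. A (Suc t) \<omega> \<in> {B. \<not> cols_vanish rA S B}} \<le> 1 - eps K" .
  have "prob {\<omega>\<in>space M. hist t \<omega> \<in> Xa \<and> \<not> cols_vanish rA S (A (Suc t) \<omega>)}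
        = prob {\<omega>\<in>space M. hist t \<omega> \<in> Xa \<and> A (Suc t) \<omega> \<in> {B. \<not> cols_vanish rA S B}}"
    by simp
  also have "\<dots> = prob {\<omega>\<in>space M. hist t \<omega> \<in> Xa}
                    * prob {\<omega>\<in>space M. A (Suc t) \<omega> \<in> {B. \<not> cols_vanish rA S B}}"
    by (rule prob_indep_past_present[OF iid_indep _ _ _ Xa Xb]) auto
  also have "\<dots> \<le> prob {\<omega>\<in>space M. hist t \<omega> \<in> Xa} * (1 - eps K)"
    by (rule mult_left_mono[OF p measure_nonneg])
  finally show ?thesis by (simp only: mult.commute)
qed

definition level_hist :: "nat \<Rightarrow> nat \<Rightarrow> nat \<Rightarrow> (int^'d) set \<Rightarrow> (nat \<Rightarrow> int^'d \<Rightarrow> int^'d \<Rightarrow> real) set"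
  where "level_hist K n t S =
    {H\<in>space (PiM {1..t} (\<lambda>_. mat_space)). nsmall rA N0 K H t = n \<and> tocc rA N0 H t = S}"

lemma level_hist_sets: "level_hist K n t S \<in> sets (PiM {1..t} (\<lambda>_. mat_space))"
  unfolding level_hist_def by (intro predE pred_intros_logic nsmall_eq_pred tocc_eq_pred) simp_all

lemma hist_in_level_hist:
  "hist t \<omega> \<in> level_hist K n t S \<longleftrightarrow> count_small K t \<omega> = n \<and> occ t \<omega> = S"
  unfolding level_hist_def count_small_hist occ_hist by (simp add: space_PiM space_mat_space)

(* From a small time t, the population survives to time t+1 with probability at most
   1 - eps K, uniformly in the past: decompose according to the occupied set S at time t. *)
lemma prob_small_survives:
  "prob {\<omega>\<in>space M. count_small K t \<omega> = n \<and> is_small K t \<omega> \<and> occ (Suc t) \<omega> \<noteq> {}}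
   \<le> (1 - eps K) * prob {\<omega>\<in>space M. count_small K t \<omega> = n \<and> is_small K t \<omega>}"
proof -
  define SS where "SS = {S\<in>Pow (reach rA N0 t). S \<noteq> {} \<and> card S \<le> K}"
  define E where "E S = {\<omega>\<in>space M. hist t \<omega> \<in> level_hist K n t S}" for S
  define F where
    "F S = {\<omega>\<in>space M. hist t \<omega> \<in> level_hist K n t S \<and> \<not> cols_vanish rA S (A (Suc t) \<omega>)}" for S
  have SS: "finite SS" "\<And>S. S \<in> SS \<Longrightarrow> S \<noteq> {} \<and> finite S \<and> card S \<le> K"
    using finite_reach[of rA t] unfolding SS_def by (auto intro: finite_subset)
  have E_sets: "E S \<in> sets M" for S
    unfolding E_def by (intro predE pred_sets2[OF level_hist_sets hist_measurable])
  have F_sets: "S \<in> SS \<Longrightarrow> F S \<in> sets M" for S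
    unfolding F_def using SS(2)
    by (intro predE pred_intros_logic pred_sets2[OF level_hist_sets hist_measurable]
              measurable_compose[OF A_measurable cols_vanish_pred]) auto
  have small_SS: "is_small K t \<omega> \<longleftrightarrow> (\<exists>S\<in>SS. occ t \<omega> = S)" for \<omega>
    unfolding SS_def small_iff by blast
  have "{\<omega>\<in>space M. count_small K t \<omega> = n \<and> is_small K t \<omega> \<and> occ (Suc t) \<omega> \<noteq> {}}
        \<subseteq> (\<Union>S\<in>SS. F S)"
    unfolding F_def hist_in_level_hist small_SS using tocc_killed by blast
  then have "prob {\<omega>\<in>space M. count_small K t \<omega> = n \<and> is_small K t \<omega> \<and> occ (Suc t) \<omega> \<noteq> {}}
             \<le> prob (\<Union>S\<in>SS. F S)"
    using F_sets SS(1) by (intro finite_measure_mono) auto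
  also have "\<dots> \<le> (\<Sum>S\<in>SS. prob (F S))"
    using F_sets SS(1) by (intro measure_UNION_le) auto
  also have "\<dots> \<le> (\<Sum>S\<in>SS. (1 - eps K) * prob (E S))"
    unfolding F_def E_def using SS(2) by (intro sum_mono prob_not_killed level_hist_sets) auto
  also have "\<dots> = (1 - eps K) * prob (\<Union>S\<in>SS. E S)"
  proof -
    have "disjoint_family_on E SS"
      unfolding disjoint_family_on_def E_def hist_in_level_hist by auto
    then show ?thesis
      using E_sets SS(1) by (subst measure_finite_Union) (auto simp: sum_distrib_left)
  qed
  also have "(\<Union>S\<in>SS. E S) = {\<omega>\<in>space M. count_small K t \<omega> = n \<and> is_small K t \<omega>}"
    unfolding E_def hist_in_level_hist small_SS by blast
  finally show ?thesis .
qed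

lemma prob_two_more_small_le:
  "prob {\<omega>\<in>space M. Suc (Suc n) \<le> count_small K T \<omega>}
   \<le> (\<Sum>t<T. prob {\<omega>\<in>space M. count_small K t \<omega> = n \<and> is_small K t \<omega> \<and> occ (Suc t) \<omega> \<noteq> {}})"
proof -
  define F where "F t = {\<omega>\<in>space M. count_small K t \<omega> = n \<and> is_small K t \<omega> \<and> occ (Suc t) \<omega> \<noteq> {}}"
    for t
  have F_sets: "F t \<in> sets M" for t
    unfolding F_def by (intro predE pred_intros_logic pred_is_small pred_occ_eq) measurable
  have "{\<omega>\<in>space M. Suc (Suc n) \<le> count_small K T \<omega>} \<subseteq> (\<Union>t\<in>{..<T}. F t)"
  proof
    fix \<omega> assume \<omega>: "\<omega> \<in> {\<omega>\<in>space M. Suc (Suc n) \<le> count_small K T \<omega>}"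
    then obtain t where "t < T" "count_small K t \<omega> = n" "is_small K t \<omega>" "occ (Suc t) \<omega> \<noteq> {}"
      using nsmall_survived_small_time[of n rA K "\<lambda>i. A i \<omega>" T] by blast
    with \<omega> show "\<omega> \<in> (\<Union>t\<in>{..<T}. F t)"
      unfolding F_def by blast
  qed
  then have "prob {\<omega>\<in>space M. Suc (Suc n) \<le> count_small K T \<omega>} \<le> prob (\<Union>t\<in>{..<T}. F t)"
    using F_sets by (intro finite_measure_mono) auto
  also have "\<dots> \<le> (\<Sum>t<T. prob (F t))"
    using F_sets by (intro measure_UNION_le) auto
  finally show ?thesis unfolding F_def .
qed

lemma sum_prob_small_level_le:
  "(\<Sum>t<T. prob {\<omega>\<in>space M. count_small K t \<omega> = n \<and> is_small K t \<omega>})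
   \<le> prob {\<omega>\<in>space M. Suc n \<le> count_small K T \<omega>}"
proof -
  define E where "E t = {\<omega>\<in>space M. count_small K t \<omega> = n \<and> is_small K t \<omega>}" for t
  have E_sets: "E t \<in> sets M" for t
    unfolding E_def by (intro predE pred_intros_logic pred_is_small) measurable
  have "E s \<inter> E t = {}" if st: "s < t" for s t
  proof -
    have "\<omega> \<notin> E t" if "\<omega> \<in> E s" for \<omega>
      using that nsmall_after_small[OF st, of rA N0 K "\<lambda>i. A i \<omega>"] by (auto simp: E_def)
    then show ?thesis by blast
  qed
  then have "disjoint_family_on E {..<T}"
    unfolding disjoint_family_on_def by (metis Int_commute linorder_neqE_nat)
  then have "(\<Sum>t<T. prob (E t)) = prob (\<Union>t\<in>{..<T}. E t)"
    using E_sets by (subst measure_finite_Union) auto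
  also have "\<dots> \<le> prob {\<omega>\<in>space M. Suc n \<le> count_small K T \<omega>}"
  proof (rule finite_measure_mono)
    show "(\<Union>t\<in>{..<T}. E t) \<subseteq> {\<omega>\<in>space M. Suc n \<le> count_small K T \<omega>}"
    proof
      fix \<omega> assume "\<omega> \<in> (\<Union>t\<in>{..<T}. E t)"
      then obtain t where "t < T" "\<omega> \<in> E t" by blast
      then show "\<omega> \<in> {\<omega>\<in>space M. Suc n \<le> count_small K T \<omega>}"
        using nsmall_after_small[of t T rA N0 K "\<lambda>i. A i \<omega>"] by (auto simp: E_def)
    qed
  qed (rule predE[OF pred_count_small_ge])
  finally show ?thesis unfolding E_def .
qed

lemma prob_many_small: "prob {\<omega>\<in>space M. Suc n \<le> count_small K T \<omega>} \<le> (1 - eps K) ^ n"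
proof (induction n arbitrary: T)
  case (Suc n)
  have "prob {\<omega>\<in>space M. Suc (Suc n) \<le> count_small K T \<omega>}
        \<le> (\<Sum>t<T. prob {\<omega>\<in>space M. count_small K t \<omega> = n \<and> is_small K t \<omega> \<and> occ (Suc t) \<omega> \<noteq> {}})"
    by (rule prob_two_more_small_le)
  also have "\<dots> \<le> (\<Sum>t<T. (1 - eps K) * prob {\<omega>\<in>space M. count_small K t \<omega> = n \<and> is_small K t \<omega>})"
    by (intro sum_mono prob_small_survives)
  also have "\<dots> \<le> (1 - eps K) * prob {\<omega>\<in>space M. Suc n \<le> count_small K T \<omega>}"
    unfolding sum_distrib_left[symmetric] using eps_le_1[of K]
    by (intro mult_left_mono sum_prob_small_level_le) auto
  also have "\<dots> \<le> (1 - eps K) * (1 - eps K) ^ n"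
    using eps_le_1[of K] Suc.IH by (intro mult_left_mono) auto
  finally show ?case by simp
qed simp

lemma AE_eventually_not_small: "AE \<omega> in M. \<exists>T0. \<forall>t\<ge>T0. \<not> is_small K t \<omega>"
proof -
  define U where "U n T = {\<omega>\<in>space M. n \<le> count_small K T \<omega>}" for n T
  define B where "B = {\<omega>\<in>space M. \<forall>n. \<exists>T. n \<le> count_small K T \<omega>}"
  have U_sets: "U n T \<in> sets M" for n T
    unfolding U_def by measurable
  have B_sets: "B \<in> sets M"
    unfolding B_def by measurable
  have "prob B \<le> (1 - eps K) ^ n" for n
  proof -
    have "incseq (U (Suc n))"
      by (rule incseq_SucI) (auto simp: U_def)
    then have "(\<lambda>T. prob (U (Suc n) T)) \<longlonglongrightarrow> prob (\<Union>T. U (Suc n) T)"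
      using U_sets by (intro finite_Lim_measure_incseq) auto
    then have "prob (\<Union>T. U (Suc n) T) \<le> (1 - eps K) ^ n"
      by (rule LIMSEQ_le_const2) (use prob_many_small in \<open>auto simp: U_def\<close>)
    moreover have "prob B \<le> prob (\<Union>T. U (Suc n) T)"
      using U_sets by (intro finite_measure_mono) (auto simp: B_def U_def)
    ultimately show ?thesis by simp
  qed
  moreover have "(\<lambda>n. (1 - eps K) ^ n) \<longlonglongrightarrow> 0"
    using eps_pos[of K] eps_le_1[of K] by (intro LIMSEQ_power_zero) auto
  ultimately have "prob B \<le> 0"
    by (intro LIMSEQ_le_const) auto
  then have "B \<in> null_sets M"
    using B_sets measure_nonneg[of M B] by (auto simp: emeasure_eq_measure)
  moreover have "{\<omega>\<in>space M. \<not> (\<exists>T0. \<forall>t\<ge>T0. \<not> is_small K t \<omega>)} \<subseteq> B"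
  proof
    fix \<omega> assume \<omega>: "\<omega> \<in> {\<omega>\<in>space M. \<not> (\<exists>T0. \<forall>t\<ge>T0. \<not> is_small K t \<omega>)}"
    then have "\<exists>T. m \<le> count_small K T \<omega>" for m
      by (intro nsmall_unbounded) blast
    with \<omega> show "\<omega> \<in> B"
      unfolding B_def by blast
  qed
  ultimately show ?thesis
    by (rule AE_I')
qed

theorem occupied_tends_to_zero_or_infinity:
  "AE \<omega> in M. ((\<lambda>t. ecard (occupied A N0 t \<omega>)) \<longlonglongrightarrow> 0)
              \<or> ((\<lambda>t. ecard (occupied A N0 t \<omega>)) \<longlonglongrightarrow> \<infinity>)"
proof -
  have "AE \<omega> in M. \<forall>K. \<exists>T0. \<forall>t\<ge>T0. \<not> is_small K t \<omega>"
    using AE_eventually_not_small by (subst AE_all_countable) auto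
  with AE_regular show ?thesis
  proof eventually_elim
    case (elim \<omega>)
    have "occupied A N0 t \<omega> = occ t \<omega>" for t
      unfolding occupied_def tocc_def popN_eq_tpop[OF elim(1)] ..
    moreover have "((\<lambda>t. ecard (occ t \<omega>)) \<longlonglongrightarrow> 0) \<or> ((\<lambda>t. ecard (occ t \<omega>)) \<longlonglongrightarrow> \<infinity>)"
    proof (rule ecard_tends_to_zero_or_infinity)
      fix K
      obtain T0 where "\<forall>t\<ge>T0. \<not> is_small K t \<omega>"
        using elim(2) by blast
      then show "\<exists>T0. \<forall>t\<ge>T0. occ t \<omega> = {} \<or> K < card (occ t \<omega>)"
        by (auto simp: small_def not_le)
    qed (simp_all add: finite_tocc tocc_empty_absorbing)
    ultimately show ?case by simp
  qed
qed

end

theorem lemma1p3: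
  fixes M :: "'w measure"
    and A :: "nat \<Rightarrow> 'w \<Rightarrow> int ^ 'd \<Rightarrow> int ^ 'd \<Rightarrow> real"
    and N0 :: "int ^ 'd \<Rightarrow> real"
    and rA :: nat
  assumes prob: "prob_space M"
    and iid_indep: "prob_space.indep_vars M (\<lambda>_. mat_space) A {1..}"
    and iid_dist: "\<And>t. t \<ge> 1 \<Longrightarrow> distr M mat_space (A t) = distr M mat_space (A 1)"
    and nonneg: "\<And>x y. AE \<omega> in M. A 1 \<omega> x y \<ge> 0"
    and cols_indep: "prob_space.indep_vars M (\<lambda>_. col_space) (\<lambda>y \<omega>. (\<lambda>x. A 1 \<omega> x y)) UNIV"
    and square_int: "\<And>x y. integrable M (\<lambda>\<omega>. (A 1 \<omega> x y)\<^sup>2)"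
    and finite_range: "\<And>x y. l1norm (x - y) > int rA \<Longrightarrow> AE \<omega> in M. A 1 \<omega> x y = 0"
    and shift_inv: "\<And>z. distr M mat_space (\<lambda>\<omega>. (\<lambda>x y. A 1 \<omega> (x + z) (y + z)))
                         = distr M mat_space (A 1)"
    and nondeg: "\<exists>B \<subseteq> {x. infsum (\<lambda>y. (integral\<^sup>L M (\<lambda>\<omega>. A 1 \<omega> 0 (x + y)))
                                        * (integral\<^sup>L M (\<lambda>\<omega>. A 1 \<omega> 0 y))) UNIV \<noteq> 0}.
                  independent (to_real_vec ` B) \<and> span (to_real_vec ` B) = UNIV"
    and N0_nonneg: "\<And>x. N0 x \<ge> 0"
    and N0_fin: "finite {x. N0 x > 0}"
    and N0_ne: "{x. N0 x > 0} \<noteq> {}"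
    and delta_pos: "measure M {\<omega> \<in> space M. \<forall>x. A 1 \<omega> x 0 = 0} > 0"
  shows "AE \<omega> in M. ((\<lambda>t. ecard (occupied A N0 t \<omega>)) \<longlonglongrightarrow> 0)
                    \<or> ((\<lambda>t. ecard (occupied A N0 t \<omega>)) \<longlonglongrightarrow> \<infinity>)"
proof -
  interpret prob_space M
    by (rule prob)
  interpret random_growth M N0 A rA
    by unfold_locales
       (fact iid_indep iid_dist nonneg cols_indep finite_range shift_inv N0_nonneg N0_fin delta_pos)+
  show ?thesis
    by (rule occupied_tends_to_zero_or_infinity)
qed

end
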